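(* Let $p$ be a prime, $k\ge1$, $n=4k$, and let $f:\mathbb{F}_{p^n}\to\mathbb{F}_{p^{2k}}$ be $f(x)=T^n_k(x)+T^n_{2k}(x)$. Then: (1) every $\gamma\in\mathbb{F}_{p^n}^*$ with $\gamma+\gamma^{p^{2k}}=0$ is a $0$-translator of $f$, i.e. $f(x+u\gamma)-f(x)=0$ for all $x\in\mathbb{F}_{p^n}$ and all $u\in\mathbb{F}_{p^{2k}}$; (2) if $p=2$, then every $\gamma\in\mathbb{F}_{2^n}^*$ is a $(k,\gamma^{2^k}+\gamma^{2^{3k}})$-Frobenius translator of $f$, i.e. $f(x+u\gamma)-f(x)=u^{2^k}(\gamma^{2^k}+\gamma^{2^{3k}})$ for all $x\in\mathbb{F}_{2^n}$ and all $u\in\mathbb{F}_{2^{2k}}$.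
   Context: For $m\mid n$, $T^n_m:\mathbb{F}_{p^n}\to\mathbb{F}_{p^m}$ denotes the relative trace $T^n_m(\beta)=\beta+\beta^{p^m}+\dots+\beta^{p^{(n/m-1)m}}$. For a function $f:\mathbb{F}_{p^n}\to\mathbb{F}_{p^{m}}$ with $m\mid n$, $\gamma\in\mathbb{F}_{p^n}^*$, $b\in\mathbb{F}_{p^m}$ and $i\in\{0,\dots,m-1\}$, $\gamma$ is an $(i,b)$-Frobenius translator of $f$ (with respect to $\mathbb{F}_{p^m}$) if $f(x+u\gamma)-f(x)=u^{p^i}b$ for all $x\in\mathbb{F}_{p^n}$ and all $u\in\mathbb{F}_{p^m}$; a $0$-translator is one with $b=0$. *)

theory Defs
  imports "HOL-Computational_Algebra.Primes"
begin

text \<open>The finite field F_{p^n} is modelled as a finite field type 'a with CARD('a) = p^n.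
  The subfield F_{p^m} (for m dividing n) is the set of elements fixed by x \<mapsto> x^(p^m).\<close>

definition subfld :: "nat \<Rightarrow> nat \<Rightarrow> 'a::field set" where
  "subfld p m = {x. x ^ (p ^ m) = x}"

definition rel_trace :: "nat \<Rightarrow> nat \<Rightarrow> nat \<Rightarrow> 'a::field \<Rightarrow> 'a" where
  "rel_trace p n m \<beta> = (\<Sum>i<n div m. \<beta> ^ (p ^ (i * m)))"

definition frob_translator ::
    "nat \<Rightarrow> nat \<Rightarrow> ('a::field \<Rightarrow> 'a) \<Rightarrow> 'a \<Rightarrow> nat \<Rightarrow> 'a \<Rightarrow> bool" where
  "frob_translator p m f \<gamma> i b \<longleftrightarrow>
     \<gamma> \<noteq> 0 \<and> b \<in> subfld p m \<and> i < m \<and>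
     (\<forall>x. \<forall>u \<in> subfld p m. f (x + u * \<gamma>) - f x = u ^ (p ^ i) * b)"

end

theory Submission
  imports Defs "HOL-Number_Theory.Residues"
begin

text \<open>Since \<open>p\<close> is the characteristic, \<open>x \<mapsto> x ^ p ^ j\<close> is additive, so both
  relative traces and hence \<open>f\<close> are additive and \<open>f (x + u \<gamma>) - f x = f (u \<gamma>)\<close>.
  Writing \<open>q = p ^ k\<close>, the field has \<open>q ^ 4\<close> elements and \<open>f y = 2 y + y ^ q + 2 y ^ (q^2) + y ^ (q^3)\<close>.
  If \<open>\<gamma> ^ (q^2) = - \<gamma>\<close> and \<open>u ^ (q^2) = u\<close>, then \<open>y = u \<gamma>\<close> satisfies \<open>y ^ (q^2) = - y\<close>,
  and all terms cancel in pairs. In characteristic 2 only \<open>y ^ q + y ^ (q^3)\<close> survives,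
  which for \<open>y = u \<gamma>\<close> equals \<open>u ^ q (\<gamma> ^ q + \<gamma> ^ (q^3))\<close> because \<open>u ^ (q^3) = u ^ q\<close>.\<close>

lemma power_card_UNIV_eq_self:
  fixes x :: "'a::{finite,field}"
  shows "x ^ card (UNIV :: 'a set) = x"
proof (cases "x = 0")
  case True
  have "0 < card (UNIV :: 'a set)"
    by (rule finite_UNIV_card_ge_0) simp
  with True show ?thesis by simp
next
  case False
  define U where "U = UNIV - {0 :: 'a}"
  have "inj_on ((*) x) U" using False by (auto intro: inj_onI)
  moreover have "(*) x ` U = U"
  proof
    show "(*) x ` U \<subseteq> U" using False by (auto simp: U_def)
    show "U \<subseteq> (*) x ` U"
    proof
      fix y assume "y \<in> U"
      then have "y = x * (y / x)" "y / x \<in> U" using False by (auto simp: U_def)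
      then show "y \<in> (*) x ` U" by blast
    qed
  qed
  ultimately have "prod id U = prod ((*) x) U"
    using prod.reindex[of "(*) x" U id] by simp
  also have "\<dots> = x ^ card U * prod id U"
    by (simp add: prod.distrib)
  finally have "x ^ card U = 1"
    by (simp add: U_def)
  moreover have "card (UNIV :: 'a set) = Suc (card U)"
    unfolding U_def by (rule card_Suc_Diff1[symmetric]) simp_all
  ultimately show ?thesis by simp
qed

lemma CHAR_eq_prime_if_card_prime_power:
  assumes "prime p" and "card (UNIV :: 'a::{finite,field} set) = p ^ n"
  shows "CHAR('a) = p"
proof -
  have "prime CHAR('a)"
    using finite_imp_CHAR_pos[where 'a = 'a] prime_CHAR_semidom by simp
  moreover have "CHAR('a) dvd p ^ n"
    using CHAR_dvd_CARD[where 'a = 'a] assms(2) by simp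
  ultimately show ?thesis
    using assms(1) prime_dvd_power primes_dvd_imp_eq by blast
qed

lemma power_prime_power_power:
  "((x :: 'a::comm_monoid_mult) ^ p ^ a) ^ p ^ b = x ^ p ^ (a + b)"
  by (simp add: power_mult power_add)

lemma subfld_power_add:
  assumes "u \<in> subfld p m"
  shows "u ^ p ^ (m + j) = u ^ p ^ j"
  using assms by (simp add: subfld_def flip: power_prime_power_power)

lemma frobenius_minus:
  fixes x :: "'a::comm_ring_1"
  assumes "prime p" and "CHAR('a) = p"
  shows "(- x) ^ p ^ n = - (x ^ p ^ n)"
proof -
  have "x ^ p ^ n + (- x) ^ p ^ n = (x + - x) ^ p ^ n"
    using assms by (simp only: freshmans_dream')
  also have "\<dots> = 0"
    using prime_gt_0_nat[OF assms(1)] by (simp add: power_0_left)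
  finally show ?thesis
    by (simp add: eq_neg_iff_add_eq_0 add.commute)
qed

lemma rel_trace_add:
  fixes x y :: "'a::field"
  assumes "prime p" and "CHAR('a) = p"
  shows "rel_trace p n m (x + y) = rel_trace p n m x + rel_trace p n m y"
  using assms by (simp add: rel_trace_def freshmans_dream' sum.distrib)

lemma rel_trace_4k_k:
  assumes "0 < k"
  shows "rel_trace p (4 * k) k y = y + y ^ p ^ k + y ^ p ^ (2 * k) + y ^ p ^ (3 * k)"
proof -
  have "{..<4::nat} = {0, 1, 2, 3}" by auto
  then show ?thesis
    using assms by (simp add: rel_trace_def mult.commute add.assoc)
qed

lemma rel_trace_4k_2k:
  assumes "0 < k"
  shows "rel_trace p (4 * k) (2 * k) y = y + y ^ p ^ (2 * k)"
proof -
  have "{..<2::nat} = {0, 1}" by auto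
  then show ?thesis
    using assms by (simp add: rel_trace_def mult.commute)
qed

lemma rel_trace_4k_k_eq_0:
  fixes y :: "'a::field"
  assumes "prime p" and "CHAR('a) = p" and "0 < k" and "y ^ p ^ (2 * k) = - y"
  shows "rel_trace p (4 * k) k y = 0"
proof -
  have "y ^ p ^ (3 * k) = (y ^ p ^ (2 * k)) ^ p ^ k"
    by (simp add: power_prime_power_power add.commute)
  also have "\<dots> = - (y ^ p ^ k)"
    using assms by (simp add: frobenius_minus)
  finally show ?thesis
    using assms(3,4) by (simp add: rel_trace_4k_k)
qed

lemma rel_trace_4k_k_plus_rel_trace_4k_2k_char_2:
  fixes y :: "'a::field"
  assumes "CHAR('a) = 2" and "0 < k"
  shows "rel_trace 2 (4 * k) k y + rel_trace 2 (4 * k) (2 * k) y = y ^ 2 ^ k + y ^ 2 ^ (3 * k)"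
proof -
  have double_eq_0: "z + z = 0" for z :: 'a
    using of_nat_CHAR[where 'a = 'a] assms(1) by (metis mult_2 mult_zero_left of_nat_numeral)
  have "rel_trace 2 (4 * k) k y + rel_trace 2 (4 * k) (2 * k) y
      = (y + y) + (y ^ 2 ^ (2 * k) + y ^ 2 ^ (2 * k)) + (y ^ 2 ^ k + y ^ 2 ^ (3 * k))"
    unfolding rel_trace_4k_k[OF assms(2)] rel_trace_4k_2k[OF assms(2)] by (simp add: algebra_simps)
  then show ?thesis
    by (simp add: double_eq_0)
qed

lemma frob_translator_additive_iff:
  assumes "\<And>x y. f (x + y) = f x + f y"
  shows "frob_translator p m f \<gamma> i b \<longleftrightarrow>
    \<gamma> \<noteq> 0 \<and> b \<in> subfld p m \<and> i < m \<and> (\<forall>u \<in> subfld p m. f (u * \<gamma>) = u ^ p ^ i * b)"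
  using assms by (simp add: frob_translator_def)

lemma additive_rel_trace_sum:
  fixes f :: "'a::field \<Rightarrow> 'a"
  assumes "prime p" and "CHAR('a) = p"
    and "\<And>x. f x = rel_trace p n k x + rel_trace p n (2 * k) x"
  shows "f (x + y) = f x + f y"
  using assms by (simp add: rel_trace_add)

lemma rel_trace_sum_zero_translator:
  fixes f :: "'a::field \<Rightarrow> 'a"
  assumes "prime p" and "CHAR('a) = p" and "0 < k"
    and f_eq: "\<And>x. f x = rel_trace p (4 * k) k x + rel_trace p (4 * k) (2 * k) x"
    and "\<gamma> \<noteq> 0" and "\<gamma> + \<gamma> ^ p ^ (2 * k) = 0"
  shows "frob_translator p (2 * k) f \<gamma> 0 0"
proof -
  have "\<gamma> ^ p ^ (2 * k) = - \<gamma>"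
    using \<open>\<gamma> + \<gamma> ^ p ^ (2 * k) = 0\<close> by (simp add: eq_neg_iff_add_eq_0 add.commute)
  then have "(u * \<gamma>) ^ p ^ (2 * k) = - (u * \<gamma>)" if "u \<in> subfld p (2 * k)" for u
    using that by (simp add: power_mult_distrib subfld_def)
  then have "f (u * \<gamma>) = 0" if "u \<in> subfld p (2 * k)" for u
    using that assms(1-3) by (simp add: f_eq rel_trace_4k_k_eq_0 rel_trace_4k_2k)
  moreover have "(0::'a) \<in> subfld p (2 * k)"
    using prime_gt_0_nat[OF assms(1)] by (simp add: subfld_def)
  ultimately show ?thesis
    using assms additive_rel_trace_sum[OF assms(1,2) f_eq]
    by (simp add: frob_translator_additive_iff)
qed

lemma rel_trace_sum_frob_translator_char_2:
  fixes f :: "'a::field \<Rightarrow> 'a"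
  assumes "CHAR('a) = 2" and "0 < k"
    and f_eq: "\<And>x. f x = rel_trace 2 (4 * k) k x + rel_trace 2 (4 * k) (2 * k) x"
    and "\<gamma> \<noteq> 0" and "\<gamma> \<in> subfld 2 (4 * k)"
  shows "frob_translator 2 (2 * k) f \<gamma> k (\<gamma> ^ 2 ^ k + \<gamma> ^ 2 ^ (3 * k))"
proof -
  have "\<gamma> ^ 2 ^ (3 * k + 2 * k) = \<gamma> ^ 2 ^ k"
    using subfld_power_add[OF assms(5), of k] by (simp add: algebra_simps)
  then have "\<gamma> ^ 2 ^ k + \<gamma> ^ 2 ^ (3 * k) \<in> subfld 2 (2 * k)"
    using assms(1) by (simp add: subfld_def freshmans_dream' power_prime_power_power add.commute)
  moreover have "f (u * \<gamma>) = u ^ 2 ^ k * (\<gamma> ^ 2 ^ k + \<gamma> ^ 2 ^ (3 * k))"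
    if "u \<in> subfld 2 (2 * k)" for u
  proof -
    have "u ^ 2 ^ (3 * k) = u ^ 2 ^ k"
      using subfld_power_add[OF that, of k] by (simp add: algebra_simps)
    then show ?thesis
      using assms(1,2)
      by (simp add: f_eq rel_trace_4k_k_plus_rel_trace_4k_2k_char_2 power_mult_distrib distrib_left)
  qed
  ultimately show ?thesis
    using assms additive_rel_trace_sum[OF two_is_prime_nat assms(1) f_eq]
    by (simp add: frob_translator_additive_iff)
qed

theorem proposition2:
  fixes p k :: nat and f :: "'a::{finite,field} \<Rightarrow> 'a"
  assumes "prime p" and "k \<ge> 1" and "card (UNIV::'a set) = p ^ (4 * k)"
    and "\<And>x. f x = rel_trace p (4 * k) k x + rel_trace p (4 * k) (2 * k) x"
  shows "(\<forall>\<gamma>::'a. \<gamma> \<noteq> 0 \<and> \<gamma> + \<gamma> ^ (p ^ (2 * k)) = 0 \<longrightarrow>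
            frob_translator p (2 * k) f \<gamma> 0 0)
       \<and> (p = 2 \<longrightarrow> (\<forall>\<gamma>::'a. \<gamma> \<noteq> 0 \<longrightarrow>
            frob_translator p (2 * k) f \<gamma> k (\<gamma> ^ (2 ^ k) + \<gamma> ^ (2 ^ (3 * k)))))"
proof -
  have char: "CHAR('a) = p"
    using CHAR_eq_prime_if_card_prime_power assms(1,3) by blast
  have k_pos: "0 < k" using assms(2) by simp
  show ?thesis
  proof (intro conjI allI impI)
    fix \<gamma> :: 'a
    assume "\<gamma> \<noteq> 0 \<and> \<gamma> + \<gamma> ^ p ^ (2 * k) = 0"
    then show "frob_translator p (2 * k) f \<gamma> 0 0"
      using rel_trace_sum_zero_translator[OF assms(1) char k_pos assms(4)] by blast
  next
    fix \<gamma> :: 'a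
    assume "p = 2" and "\<gamma> \<noteq> 0"
    have "\<gamma> \<in> subfld 2 (4 * k)"
      using power_card_UNIV_eq_self[of \<gamma>] assms(3) \<open>p = 2\<close> by (simp add: subfld_def)
    with char k_pos assms(4) \<open>\<gamma> \<noteq> 0\<close>
    show "frob_translator p (2 * k) f \<gamma> k (\<gamma> ^ 2 ^ k + \<gamma> ^ 2 ^ (3 * k))"
      unfolding \<open>p = 2\<close> by (rule rel_trace_sum_frob_translator_char_2)
  qed
qed

end
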